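(* Let $L$ be a totally ordered normal incline and let $A$ be an $n\times n$ completely positive matrix over $L$. Then $\mathrm{CP\text{-}rank}(A)\le\max\{n,[n^2/4]\}$. Further, for $n\ge 4$, $A$ has an $[n^2/4]$-support $3$ rank $1$ CP-representation, i.e. there exist $m\le[n^2/4]$ column vectors $b_1,\dots,b_m\in L^n$, each having at most three entries different from $\mathbf{0}$, such that $A=\bigoplus_{j=1}^m b_jb_j^T$.
   Context: An incline is a nonempty set $L$ with binary operations $\oplus,\otimes$ such that $(L,\oplus)$ is a semilattice ($\oplus$ associative, commutative, idempotent), $(L,\otimes)$ is a semigroup, $x\otimes(y\oplus z)=(x\otimes y)\oplus(x\otimes z)$ and $x\oplus(x\otimes y)=x$ for all $x,y,z$. The order is $x\le y\iff x\oplus y=y$; $L$ is totally ordered if this order is total, and commutative if $\otimes$ is commutative. An r-ideal is a nonempty $J\subseteq L$ closed under $\oplus$ and under multiplication by arbitrary elements of $L$; a lattice ideal is a nonempty $J\subseteq L$ closed under $\oplus$ and downward closed. A commutative incline $L$ is normal if it has an additive identity $\mathbf{0}$ and a multiplicative identity $\mathbf{1}$ and: every singly generated r-ideal is a lattice ideal (LI-property); for each $x\in L$ there is a unique $c$ with $c\otimes c=x$ (unique square root property); $x\otimes y\le(x\otimes x)\oplus(y\otimes y)$ for all $x,y$ (AG-property). Matrix product: $(BC)_{ij}=\bigoplus_k b_{ik}\otimes c_{kj}$; matrix sum $\oplus$ is entrywise; $B^T$ is the transpose. $A$ is completely positive if $A=BB^T$ for some $n\times k$ matrix $B$ over $L$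 all of whose entries are of the form $c\otimes c$. The CP-rank of a completely positive $A$ is the smallest $k$ such that $A=BB^T$ with $B$ an $n\times k$ matrix over $L$. $[x]$ is the greatest integer not exceeding $x$. *)

theory Defs
  imports Main
begin

definition incline :: "('a \<Rightarrow> 'a \<Rightarrow> 'a) \<Rightarrow> ('a \<Rightarrow> 'a \<Rightarrow> 'a) \<Rightarrow> bool" where
  "incline pl tm \<longleftrightarrow>
     (\<forall>x y z. pl (pl x y) z = pl x (pl y z)) \<and> (\<forall>x y. pl x y = pl y x) \<and> (\<forall>x. pl x x = x) \<and>
     (\<forall>x y z. tm (tm x y) z = tm x (tm y z)) \<and>
     (\<forall>x y z. tm x (pl y z) = pl (tm x y) (tm x z)) \<and>
     (\<forall>x y. pl x (tm x y) = x)"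

definition inc_le :: "('a \<Rightarrow> 'a \<Rightarrow> 'a) \<Rightarrow> 'a \<Rightarrow> 'a \<Rightarrow> bool" where
  "inc_le pl x y \<longleftrightarrow> pl x y = y"

definition totally_ordered_incline :: "('a \<Rightarrow> 'a \<Rightarrow> 'a) \<Rightarrow> bool" where
  "totally_ordered_incline pl \<longleftrightarrow> (\<forall>x y. inc_le pl x y \<or> inc_le pl y x)"

definition r_ideal :: "('a \<Rightarrow> 'a \<Rightarrow> 'a) \<Rightarrow> ('a \<Rightarrow> 'a \<Rightarrow> 'a) \<Rightarrow> 'a set \<Rightarrow> bool" where
  "r_ideal pl tm J \<longleftrightarrow> J \<noteq> {} \<and> (\<forall>x\<in>J. \<forall>y\<in>J. pl x y \<in> J) \<and>
     (\<forall>x\<in>J. \<forall>y. tm y x \<in> J \<and> tm x y \<in> J)"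

definition lattice_ideal :: "('a \<Rightarrow> 'a \<Rightarrow> 'a) \<Rightarrow> 'a set \<Rightarrow> bool" where
  "lattice_ideal pl J \<longleftrightarrow> J \<noteq> {} \<and> (\<forall>x\<in>J. \<forall>y\<in>J. pl x y \<in> J) \<and>
     (\<forall>x\<in>J. \<forall>y. inc_le pl y x \<longrightarrow> y \<in> J)"

definition gen_r_ideal :: "('a \<Rightarrow> 'a \<Rightarrow> 'a) \<Rightarrow> ('a \<Rightarrow> 'a \<Rightarrow> 'a) \<Rightarrow> 'a \<Rightarrow> 'a set" where
  "gen_r_ideal pl tm x = \<Inter>{J. r_ideal pl tm J \<and> x \<in> J}"

definition normal_incline ::
  "('a \<Rightarrow> 'a \<Rightarrow> 'a) \<Rightarrow> ('a \<Rightarrow> 'a \<Rightarrow> 'a) \<Rightarrow> 'a \<Rightarrow> 'a \<Rightarrow> bool" where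
  "normal_incline pl tm z e \<longleftrightarrow>
     incline pl tm \<and> (\<forall>x y. tm x y = tm y x) \<and>
     (\<forall>x. pl z x = x) \<and> (\<forall>x. tm e x = x \<and> tm x e = x) \<and>
     (\<forall>x. lattice_ideal pl (gen_r_ideal pl tm x)) \<and>
     (\<forall>x. \<exists>!c. tm c c = x) \<and>
     (\<forall>x y. inc_le pl (tm x y) (pl (tm x x) (tm y y)))"

definition isum :: "('a \<Rightarrow> 'a \<Rightarrow> 'a) \<Rightarrow> 'a \<Rightarrow> (nat \<Rightarrow> 'a) \<Rightarrow> nat \<Rightarrow> 'a" where
  "isum pl z f k = foldr (\<lambda>j acc. pl (f j) acc) [0..<k] z"

definition BBt :: "('a \<Rightarrow> 'a \<Rightarrow> 'a) \<Rightarrow> ('a \<Rightarrow> 'a \<Rightarrow> 'a) \<Rightarrow> 'a \<Rightarrow> (nat \<Rightarrow> nat \<Rightarrow> 'a) \<Rightarrow> nat \<Rightarrow> nat \<Rightarrow> nat \<Rightarrow> 'a" where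
  "BBt pl tm z B k i j = isum pl z (\<lambda>l. tm (B i l) (B j l)) k"

definition completely_positive ::
  "('a \<Rightarrow> 'a \<Rightarrow> 'a) \<Rightarrow> ('a \<Rightarrow> 'a \<Rightarrow> 'a) \<Rightarrow> 'a \<Rightarrow> nat \<Rightarrow> (nat \<Rightarrow> nat \<Rightarrow> 'a) \<Rightarrow> bool" where
  "completely_positive pl tm z n A \<longleftrightarrow>
     (\<exists>k B. (\<forall>i<n. \<forall>l<k. \<exists>c. B i l = tm c c) \<and>
            (\<forall>i<n. \<forall>j<n. A i j = BBt pl tm z B k i j))"

definition cp_rank ::
  "('a \<Rightarrow> 'a \<Rightarrow> 'a) \<Rightarrow> ('a \<Rightarrow> 'a \<Rightarrow> 'a) \<Rightarrow> 'a \<Rightarrow> nat \<Rightarrow> (nat \<Rightarrow> nat \<Rightarrow> 'a) \<Rightarrow> nat" where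
  "cp_rank pl tm z n A = (LEAST k. \<exists>B. \<forall>i<n. \<forall>j<n. A i j = BBt pl tm z B k i j)"

end

theory Submission
  imports Defs
begin

(* Write A i i = s i \<otimes> s i.  Unique square roots and the total order bound every entry of
   a CP-factor B of A by B i l \<le> s i, so A i j \<le> s i \<otimes> s j, and the LI-property gives
   A i j = s i \<otimes> t i j with t i j \<le> s j.  A vector v with v x \<otimes> v y \<le> A x y for all x, y
   spans a rank one matrix below A, so A is the sum of any family of such vectors which attains
   every entry.  The star centred at i with leaves J, carrying s i at i and t i j at j \<in> J,
   attains A i i and the A i j; with two leaves j, k it stays below A as soon as
   t i j \<le> t k j.  Removing two vertices u, w with w maximising t x u, the cherries centred at
   the remaining m vertices together with one more star cost m + 1 = (m + 2)\<^sup>2 div 4 - m\<^sup>2 div 4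
   vectors, provided one diagonal entry may stay unattained; that happens only for at most
   three vertices, where one extra vector is affordable. *)

lemma square_div_4_add_2: "(m + 2) ^ 2 div 4 = m ^ 2 div 4 + m + (1::nat)"
proof -
  have "(m + 2) ^ 2 = m ^ 2 + (m + 1) * 4"
    by (simp add: power2_eq_square algebra_simps)
  then show ?thesis
    by simp
qed

locale incline_structure =
  fixes pl :: "'a \<Rightarrow> 'a \<Rightarrow> 'a" (infixl \<open>\<oplus>\<close> 65)
    and tm :: "'a \<Rightarrow> 'a \<Rightarrow> 'a" (infixl \<open>\<otimes>\<close> 70)
  assumes incline: "incline (\<oplus>) (\<otimes>)"
begin

abbreviation le :: "'a \<Rightarrow> 'a \<Rightarrow> bool" (infix \<open>\<preceq>\<close> 50)
  where "x \<preceq> y \<equiv> inc_le (\<oplus>) x y"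

lemma pl_assoc: "(x \<oplus> y) \<oplus> w = x \<oplus> (y \<oplus> w)"
  and pl_comm: "x \<oplus> y = y \<oplus> x"
  and pl_idem: "x \<oplus> x = x"
  and tm_assoc: "(x \<otimes> y) \<otimes> w = x \<otimes> (y \<otimes> w)"
  and tm_pl_distrib: "x \<otimes> (y \<oplus> w) = x \<otimes> y \<oplus> x \<otimes> w"
  and pl_tm_absorb: "x \<oplus> x \<otimes> y = x"
  using incline unfolding incline_def by blast+

lemma le_refl: "x \<preceq> x"
  by (simp add: inc_le_def pl_idem)

lemma le_trans: "x \<preceq> y \<Longrightarrow> y \<preceq> w \<Longrightarrow> x \<preceq> w"
  unfolding inc_le_def by (metis pl_assoc)

lemma le_antisym: "x \<preceq> y \<Longrightarrow> y \<preceq> x \<Longrightarrow> x = y"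
  unfolding inc_le_def by (metis pl_comm)

lemma le_plI1: "x \<preceq> x \<oplus> y"
  unfolding inc_le_def by (metis pl_assoc pl_idem)

lemma le_plI2: "y \<preceq> x \<oplus> y"
  using le_plI1 pl_comm by metis

lemma pl_leI: "x \<preceq> c \<Longrightarrow> y \<preceq> c \<Longrightarrow> x \<oplus> y \<preceq> c"
  unfolding inc_le_def by (metis pl_assoc)

lemma tm_le_left: "x \<otimes> y \<preceq> x"
  unfolding inc_le_def by (metis pl_tm_absorb pl_comm)

lemma tm_mono_right: "y \<preceq> y' \<Longrightarrow> x \<otimes> y \<preceq> x \<otimes> y'"
  unfolding inc_le_def by (metis tm_pl_distrib)

lemma foldr_pl_le_iff:
  "foldr (\<lambda>j acc. f j \<oplus> acc) xs a \<preceq> c \<longleftrightarrow> (\<forall>j\<in>set xs. f j \<preceq> c) \<and> a \<preceq> c"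
  by (induction xs) (auto intro: pl_leI le_trans le_plI1 le_plI2)

lemma foldr_pl_upper: "j \<in> set xs \<Longrightarrow> f j \<preceq> foldr (\<lambda>j acc. f j \<oplus> acc) xs a"
  by (induction xs) (auto intro: le_trans le_plI1 le_plI2)

lemma isum_upper: "j < m \<Longrightarrow> f j \<preceq> isum (\<oplus>) z f m"
  unfolding isum_def by (simp add: foldr_pl_upper)

lemma isum_least: "(\<And>j. j < m \<Longrightarrow> f j \<preceq> c) \<Longrightarrow> z \<preceq> c \<Longrightarrow> isum (\<oplus>) z f m \<preceq> c"
  unfolding isum_def by (simp add: foldr_pl_le_iff)

lemma isum_eq_attained:
  assumes "\<And>j. j < m \<Longrightarrow> f j \<preceq> c" "z \<preceq> c" "j0 < m" "f j0 = c"
  shows "isum (\<oplus>) z f m = c"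
  using isum_least[OF assms(1,2)] isum_upper[OF assms(3), of f z] assms(4)
  by (auto intro: le_antisym)

end

locale normal_incline_structure =
  fixes pl :: "'a \<Rightarrow> 'a \<Rightarrow> 'a" (infixl \<open>\<oplus>\<close> 65)
    and tm :: "'a \<Rightarrow> 'a \<Rightarrow> 'a" (infixl \<open>\<otimes>\<close> 70)
    and z e :: 'a
  assumes normal: "normal_incline (\<oplus>) (\<otimes>) z e"

sublocale normal_incline_structure \<subseteq> incline_structure
  using normal unfolding normal_incline_def by unfold_locales blast

context normal_incline_structure
begin

lemma tm_comm: "x \<otimes> y = y \<otimes> x"
  and z_pl: "z \<oplus> x = x"
  and e_tm: "e \<otimes> x = x" "x \<otimes> e = x"
  and principal_lattice_ideal: "lattice_ideal (\<oplus>) (gen_r_ideal (\<oplus>) (\<otimes>) x)"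
  and unique_sqrt: "\<exists>!c. c \<otimes> c = x"
  using normal unfolding normal_incline_def by blast+

lemma tm_le_right: "x \<otimes> y \<preceq> y"
  using tm_le_left tm_comm by metis

lemma tm_mono: "x \<preceq> x' \<Longrightarrow> y \<preceq> y' \<Longrightarrow> x \<otimes> y \<preceq> x' \<otimes> y'"
  by (metis le_trans tm_mono_right tm_comm)

lemma z_least: "z \<preceq> x"
  by (simp add: inc_le_def z_pl)

lemma tm_z: "x \<otimes> z = z" "z \<otimes> x = z"
  using le_antisym tm_le_right tm_le_left z_least by metis+

lemma gen_r_ideal_subset_principal: "gen_r_ideal (\<oplus>) (\<otimes>) g \<subseteq> {g \<otimes> t |t. True}"
proof -
  have "r_ideal (\<oplus>) (\<otimes>) {g \<otimes> t |t. True}"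
    unfolding r_ideal_def
    by (auto simp: tm_pl_distrib[symmetric]) (metis tm_assoc tm_comm)+
  moreover have "g \<in> {g \<otimes> t |t. True}"
    using e_tm(2) by (metis (mono_tags) mem_Collect_eq)
  ultimately show ?thesis
    unfolding gen_r_ideal_def by blast
qed

lemma le_tm_imp_factor:
  assumes "a \<preceq> x \<otimes> y"
  shows "\<exists>w. w \<preceq> y \<and> x \<otimes> w = a"
proof -
  have "x \<otimes> y \<in> gen_r_ideal (\<oplus>) (\<otimes>) (x \<otimes> y)"
    unfolding gen_r_ideal_def by blast
  then have "a \<in> gen_r_ideal (\<oplus>) (\<otimes>) (x \<otimes> y)"
    using principal_lattice_ideal assms unfolding lattice_ideal_def by blast
  then obtain t where "a = (x \<otimes> y) \<otimes> t"
    using gen_r_ideal_subset_principal by blast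
  then show ?thesis
    by (metis tm_assoc tm_le_left)
qed

end

locale totally_ordered_normal_incline = normal_incline_structure +
  assumes total: "totally_ordered_incline (\<oplus>)"
begin

lemma le_total: "x \<preceq> y \<or> y \<preceq> x"
  using total unfolding totally_ordered_incline_def by blast

lemma square_le_imp_le:
  assumes "b \<otimes> b \<preceq> c \<otimes> c"
  shows "b \<preceq> c"
proof (cases "b \<preceq> c")
  case False
  then have "c \<otimes> c \<preceq> b \<otimes> b"
    using le_total tm_mono by blast
  then have "b \<otimes> b = c \<otimes> c"
    using assms le_antisym by blast
  then have "b = c"
    using unique_sqrt by metis
  then show ?thesis
    using le_refl by simp
qed

lemma exists_maximizer:
  "finite T \<Longrightarrow> T \<noteq> {} \<Longrightarrow> \<exists>w\<in>T. \<forall>x\<in>T. f x \<preceq> f w"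
proof (induction T rule: finite_ne_induct)
  case (singleton x)
  then show ?case
    using le_refl by auto
next
  case (insert a F)
  then obtain w where "w \<in> F" "\<forall>x\<in>F. f x \<preceq> f w"
    by blast
  then show ?case
    using le_total le_trans le_refl by (metis insert_iff)
qed

end

locale diagonally_bounded_matrix = totally_ordered_normal_incline +
  fixes A :: "nat \<Rightarrow> nat \<Rightarrow> 'a" and n :: nat and s :: "nat \<Rightarrow> 'a"
  assumes A_sym: "i < n \<Longrightarrow> j < n \<Longrightarrow> A i j = A j i"
    and A_diag: "i < n \<Longrightarrow> A i i = s i \<otimes> s i"
    and A_bound: "i < n \<Longrightarrow> j < n \<Longrightarrow> A i j \<preceq> s i \<otimes> s j"
begin

definition t :: "nat \<Rightarrow> nat \<Rightarrow> 'a" where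
  "t i j = (SOME w. w \<preceq> s j \<and> s i \<otimes> w = A i j)"

lemma t_le_and_s_tm_t:
  assumes "i < n" "j < n"
  shows "t i j \<preceq> s j \<and> s i \<otimes> t i j = A i j"
  using le_tm_imp_factor[OF A_bound[OF assms]] unfolding t_def by (rule someI_ex)

lemma t_le: "i < n \<Longrightarrow> j < n \<Longrightarrow> t i j \<preceq> s j"
  and s_tm_t: "i < n \<Longrightarrow> j < n \<Longrightarrow> s i \<otimes> t i j = A i j"
  using t_le_and_s_tm_t by simp_all

lemma t_tm_s: "i < n \<Longrightarrow> j < n \<Longrightarrow> t i j \<otimes> s i = A j i"
  using s_tm_t A_sym tm_comm by metis

lemma t_tm_t_le_diag: "i < n \<Longrightarrow> j < n \<Longrightarrow> k < n \<Longrightarrow> t i j \<otimes> t k j \<preceq> A j j"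
  using tm_mono[OF t_le t_le] A_diag by metis

definition star :: "nat \<Rightarrow> nat set \<Rightarrow> nat \<Rightarrow> 'a" where
  "star i J x = (if x = i then s i else if x \<in> J then t i x else z)"

definition rank_one_below :: "(nat \<Rightarrow> 'a) \<Rightarrow> bool" where
  "rank_one_below v \<longleftrightarrow> (\<forall>x<n. \<forall>y<n. v x \<otimes> v y \<preceq> A x y)"

definition support :: "(nat \<Rightarrow> 'a) \<Rightarrow> nat set" where
  "support v = {x. x < n \<and> v x \<noteq> z}"

definition admissible :: "(nat \<Rightarrow> 'a) \<Rightarrow> bool" where
  "admissible v \<longleftrightarrow> rank_one_below v \<and> card (support v) \<le> 3"

lemma rank_one_below_star:
  assumes "i < n" "i \<notin> J"
    and leaves: "\<And>j k. j \<in> J \<Longrightarrow> k \<in> J \<Longrightarrow> j \<noteq> k \<Longrightarrow> j < n \<Longrightarrow> k < n \<Longrightarrow> t i j \<otimes> t i k \<preceq> A j k"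
  shows "rank_one_below (star i J)"
  unfolding rank_one_below_def
proof (intro allI impI)
  fix x y assume xy: "x < n" "y < n"
  consider "x = i" "y = i" | "x = i" "y \<noteq> i" "y \<in> J" | "x \<noteq> i" "x \<in> J" "y = i"
    | "x \<noteq> i" "x \<in> J" "y \<noteq> i" "y \<in> J" | "x \<notin> insert i J \<or> y \<notin> insert i J"
    by blast
  then show "star i J x \<otimes> star i J y \<preceq> A x y"
  proof cases
    case 1
    then show ?thesis
      using A_diag[of i] \<open>i < n\<close> le_refl by (simp add: star_def)
  next
    case 2
    then show ?thesis
      using s_tm_t[of i y] xy \<open>i < n\<close> le_refl by (simp add: star_def)
  next
    case 3
    then show ?thesis
      using t_tm_s[of i x] xy \<open>i < n\<close> le_refl by (simp add: star_def)
  next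
    case 4
    then show ?thesis
      using xy leaves t_tm_t_le_diag[of i x i] \<open>i < n\<close>
      by (cases "x = y") (simp_all add: star_def)
  next
    case 5
    then have "star i J x = z \<or> star i J y = z"
      by (auto simp: star_def)
    then show ?thesis
      using tm_z z_least by auto
  qed
qed

lemma rank_one_below_cherry:
  assumes "i < n" "j < n" "k < n" "i \<noteq> j" "i \<noteq> k" and "t i j \<preceq> t k j"
  shows "rank_one_below (star i {j, k})"
proof -
  have "t i j \<otimes> t i k \<preceq> A j k"
    using tm_mono[OF \<open>t i j \<preceq> t k j\<close> t_le[of i k]] t_tm_s[of k j] assms(1-3) by simp
  then have "t i k \<otimes> t i j \<preceq> A k j"
    using A_sym tm_comm assms(2,3) by metis
  with \<open>t i j \<otimes> t i k \<preceq> A j k\<close> show ?thesis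
    using assms by (intro rank_one_below_star) auto
qed

lemma admissible_star:
  assumes "rank_one_below (star i J)" "finite J" "card J \<le> 2"
  shows "admissible (star i J)"
proof -
  have "card (support (star i J)) \<le> card (insert i J)"
    using assms(2) by (intro card_mono) (auto simp: support_def star_def)
  also have "\<dots> \<le> 3"
    using assms(2,3) by (simp add: card_insert_if)
  finally show ?thesis
    using assms(1) unfolding admissible_def by simp
qed

definition covered :: "(nat \<Rightarrow> 'a) list \<Rightarrow> nat \<Rightarrow> nat \<Rightarrow> bool" where
  "covered vs i j \<longleftrightarrow> (\<exists>v\<in>set vs. v i \<otimes> v j = A i j)"

lemma covered_sym: "i < n \<Longrightarrow> j < n \<Longrightarrow> covered vs i j \<Longrightarrow> covered vs j i"
  unfolding covered_def using A_sym tm_comm by metis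

lemma covered_mono: "covered vs i j \<Longrightarrow> set vs \<subseteq> set ws \<Longrightarrow> covered ws i j"
  unfolding covered_def by blast

lemma covered_star_centre:
  assumes "star i J \<in> set vs" "i < n"
  shows "covered vs i i"
  unfolding covered_def using assms A_diag
  by (intro bexI[of _ "star i J"]) (auto simp: star_def)

lemma covered_star_leaf:
  assumes "star i J \<in> set vs" "i < n" "j < n" "j \<in> J" "i \<noteq> j"
  shows "covered vs i j" "covered vs j i"
proof -
  show "covered vs i j"
    unfolding covered_def using assms s_tm_t
    by (intro bexI[of _ "star i J"]) (auto simp: star_def)
  then show "covered vs j i"
    using covered_sym assms(2,3) by blast
qed

lemma representation_from_cover:
  assumes "\<forall>v\<in>set vs. rank_one_below v" "covered vs i l" "i < n" "l < n"
  shows "A i l = isum (\<oplus>) z (\<lambda>j. (vs ! j) i \<otimes> (vs ! j) l) (length vs)"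
proof -
  obtain j0 where "j0 < length vs" "(vs ! j0) i \<otimes> (vs ! j0) l = A i l"
    using assms(2) unfolding covered_def by (metis in_set_conv_nth)
  moreover have "\<And>j. j < length vs \<Longrightarrow> (vs ! j) i \<otimes> (vs ! j) l \<preceq> A i l"
    using assms(1,3,4) unfolding rank_one_below_def by auto
  ultimately show ?thesis
    by (intro isum_eq_attained[symmetric]) (auto simp: z_least)
qed

definition cherries :: "nat set \<Rightarrow> nat \<Rightarrow> nat \<Rightarrow> (nat \<Rightarrow> 'a) list" where
  "cherries R u w = map (\<lambda>x. star x {u, w}) (sorted_list_of_set R)"

lemma length_cherries: "finite R \<Longrightarrow> length (cherries R u w) = card R"
  by (simp add: cherries_def)

lemma set_cherries: "finite R \<Longrightarrow> set (cherries R u w) = (\<lambda>x. star x {u, w}) ` R"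
  by (simp add: cherries_def)

lemma admissible_cherries:
  assumes "finite R" "R \<subseteq> {..<n}" "u < n" "w < n" "u \<notin> R" "w \<notin> R"
    and "\<forall>x\<in>R. t x u \<preceq> t w u"
  shows "\<forall>v\<in>set (cherries R u w). admissible v"
proof
  fix v assume "v \<in> set (cherries R u w)"
  then obtain x where "x \<in> R" "v = star x {u, w}"
    using set_cherries[OF assms(1)] by auto
  then show "admissible v"
    using assms by (auto intro!: admissible_star rank_one_below_cherry simp: card_insert_if)
qed

lemma covered_cherries:
  assumes "set (cherries R u w) \<subseteq> set vs" "finite R" "R \<subseteq> {..<n}" "u < n" "w < n"
    "u \<notin> R" "w \<notin> R" "x \<in> R"
  shows "covered vs x x" "covered vs x u" "covered vs x w"
proof -
  have star: "star x {u, w} \<in> set vs" and "x < n" "x \<noteq> u" "x \<noteq> w"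
    using assms set_cherries[OF assms(2)] by auto
  then show "covered vs x x" "covered vs x u" "covered vs x w"
    using covered_star_centre[OF star] covered_star_leaf[OF star] assms(4,5) by auto
qed

definition covers_except :: "(nat \<Rightarrow> 'a) list \<Rightarrow> nat set \<Rightarrow> nat \<Rightarrow> bool" where
  "covers_except vs S y \<longleftrightarrow> (\<forall>i\<in>S. \<forall>j\<in>S. (i, j) \<noteq> (y, y) \<longrightarrow> covered vs i j)"

lemma covers_except_insert2:
  assumes "S \<subseteq> {..<n}" "p < n" "q < n" "covers_except vs S y"
    and "\<And>x. x \<in> S \<Longrightarrow> covered vs x p \<and> covered vs x q"
    and "covered vs p p" "covered vs p q" "q \<noteq> y \<Longrightarrow> covered vs q q"
  shows "covers_except vs (insert p (insert q S)) y"
  unfolding covers_except_def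
proof (intro ballI impI)
  fix i j assume ij: "i \<in> insert p (insert q S)" "j \<in> insert p (insert q S)" "(i, j) \<noteq> (y, y)"
  have "i < n" "j < n"
    using ij(1,2) assms(1-3) by auto
  moreover have "covered vs i j \<or> covered vs j i"
    using ij assms(4-8) unfolding covers_except_def by auto
  ultimately show "covered vs i j"
    using covered_sym by blast
qed

lemma covers_except_mono:
  assumes "covers_except vs0 S y0" "set vs0 \<subseteq> set vs" "y0 \<in> S \<Longrightarrow> covered vs y0 y0"
  shows "covers_except vs S y"
  unfolding covers_except_def
proof (intro ballI impI)
  fix i j assume "i \<in> S" "j \<in> S"
  show "covered vs i j"
  proof (cases "(i, j) = (y0, y0)")
    case False
    then show ?thesis
      using assms(1,2) \<open>i \<in> S\<close> \<open>j \<in> S\<close> covered_mono unfolding covers_except_def by blast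
  qed (use assms(3) \<open>i \<in> S\<close> in auto)
qed

(* At x0 the cherry is replaced by the stars centred at p and q, which also attain the
   diagonal entries of u and w; the star at p with leaves x0 and q lies below A once
   p and q are ordered so that t p x0 \<le> t q x0. *)
lemma covers_step_full:
  assumes S: "finite S" "S \<subseteq> {..<n}" and uw: "u < n" "w < n" "u \<noteq> w" "u \<notin> S" "w \<notin> S"
    and max: "\<forall>x\<in>S. t x u \<preceq> t w u"
    and IH: "covers_except vs0 S y0" "\<forall>v\<in>set vs0. admissible v"
    and x0: "x0 \<in> S" "x0 \<noteq> y0"
  shows "\<exists>vs. length vs = length vs0 + card S + 1 \<and> (\<forall>v\<in>set vs. admissible v)
    \<and> covers_except vs (insert u (insert w S)) y"
proof -
  obtain p q where pq: "(p, q) = (u, w) \<or> (p, q) = (w, u)" "t p x0 \<preceq> t q x0"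
    using le_total by blast
  have pqn: "p < n" "q < n" "p \<noteq> q" "x0 < n" "p \<noteq> x0" "q \<noteq> x0"
    using pq(1) uw x0(1) S(2) by auto
  define R where "R = S - {x0}"
  have R: "finite R" "R \<subseteq> {..<n}" "u \<notin> R" "w \<notin> R" "card R + 1 = card S"
    using S uw x0(1) card_Suc_Diff1[OF S(1) x0(1)] unfolding R_def by auto
  define vs where "vs = vs0 @ cherries R u w @ [star p {x0, q}, star q {x0}]"
  have subsets: "set vs0 \<subseteq> set vs" "set (cherries R u w) \<subseteq> set vs"
    and stars: "star p {x0, q} \<in> set vs" "star q {x0} \<in> set vs"
    unfolding vs_def by auto
  note covered_R = covered_cherries[OF subsets(2) R(1,2) uw(1,2) R(3,4)]
  have "length vs = length vs0 + card S + 1"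
    unfolding vs_def using R by (simp add: length_cherries)
  moreover have "\<forall>v\<in>set vs. admissible v"
  proof -
    have "admissible (star p {x0, q})"
      using pq pqn by (intro admissible_star rank_one_below_cherry) (auto simp: card_insert_if)
    moreover have "admissible (star q {x0})"
      using pqn by (intro admissible_star rank_one_below_star) auto
    moreover have "\<forall>v\<in>set (cherries R u w). admissible v"
      using R uw max by (intro admissible_cherries) (auto simp: R_def)
    ultimately show ?thesis
      using IH(2) unfolding vs_def by auto
  qed
  moreover have "covers_except vs (insert p (insert q S)) y"
  proof (rule covers_except_insert2)
    show "covers_except vs S y"
    proof (rule covers_except_mono[OF IH(1) subsets(1)])
      show "covered vs y0 y0" if "y0 \<in> S"
        using covered_R(1) that x0(2) unfolding R_def by blast
    qed
    show "covered vs x p \<and> covered vs x q" if "x \<in> S" for x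
    proof (cases "x = x0")
      case True
      then show ?thesis
        using covered_star_leaf(2)[OF stars(1)] covered_star_leaf(2)[OF stars(2)] pqn by auto
    next
      case False
      then show ?thesis
        using covered_R(2,3) pq(1) \<open>x \<in> S\<close> unfolding R_def by auto
    qed
  qed (use pqn S(2) covered_star_centre[OF stars(1)] covered_star_leaf[OF stars(1)]
      covered_star_centre[OF stars(2)] in auto)
  moreover have "insert p (insert q S) = insert u (insert w S)"
    using pq(1) by auto
  ultimately show ?thesis
    by auto
qed

lemma covers_step_defective:
  assumes S: "finite S" "S \<subseteq> {..<n}" "card S \<le> 1"
    and uw: "u < n" "w < n" "u \<noteq> w" "u \<notin> S" "w \<notin> S"
    and max: "\<forall>x\<in>S. t x u \<preceq> t w u"
  shows "\<exists>vs. length vs = card S + 1 \<and> (\<forall>v\<in>set vs. admissible v)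
    \<and> covers_except vs (insert u (insert w S)) w"
proof -
  define vs where "vs = cherries S u w @ [star u {w}]"
  have subset: "set (cherries S u w) \<subseteq> set vs" and star: "star u {w} \<in> set vs"
    unfolding vs_def by auto
  have "length vs = card S + 1"
    unfolding vs_def using S by (simp add: length_cherries)
  moreover have "\<forall>v\<in>set vs. admissible v"
    using admissible_cherries[OF S(1,2) uw(1,2,4,5) max] uw(1-3)
      admissible_star[OF rank_one_below_star[of u "{w}"]]
    unfolding vs_def by auto
  moreover have "covers_except vs (insert u (insert w S)) w"
  proof (rule covers_except_insert2)
    have "\<And>i j. i \<in> S \<Longrightarrow> j \<in> S \<Longrightarrow> i = j"
      using S(1,3) by (metis One_nat_def card_le_Suc0_iff_eq)
    then show "covers_except vs S w"
      using covered_cherries(1)[OF subset S(1,2) uw(1,2,4,5)] unfolding covers_except_def by blast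
  qed (use S(2) uw covered_cherries(2,3)[OF subset S(1,2) uw(1,2,4,5)]
      covered_star_centre[OF star] covered_star_leaf[OF star] in auto)
  ultimately show ?thesis
    by auto
qed

lemma exists_cherry_pair:
  assumes "finite S" "\<not> card S \<le> 1"
  obtains u w S0 where "S = insert u (insert w S0)" "u \<notin> S0" "w \<notin> S0" "u \<noteq> w"
    "\<forall>x\<in>S0. t x u \<preceq> t w u"
proof -
  obtain u where u: "u \<in> S"
    using assms(2) by (metis card.empty equals0I zero_le)
  have "\<not> S \<subseteq> {u}"
    using assms(2) card_mono[of "{u}" S] by auto
  then obtain w where "w \<in> S - {u}" "\<forall>x\<in>S - {u}. t x u \<preceq> t w u"
    using exists_maximizer[of "S - {u}" "\<lambda>x. t x u"] assms(1) by blast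
  then show ?thesis
    using u by (intro that[of u w "S - {u, w}"]) auto
qed

lemma covers_except_exists:
  assumes "finite S" "S \<subseteq> {..<n}"
  shows "\<exists>vs y. length vs \<le> card S ^ 2 div 4 \<and> (\<forall>v\<in>set vs. admissible v)
    \<and> covers_except vs S y \<and> (y \<in> S \<longrightarrow> card S \<le> 3)"
  using assms
proof (induction "card S" arbitrary: S rule: less_induct)
  case less
  show ?case
  proof (cases "card S \<le> 1")
    case True
    then have "\<forall>a\<in>S. \<forall>b\<in>S. a = b"
      using less.prems(1) card_le_Suc0_iff_eq by auto
    then obtain y where "S \<subseteq> {y}"
      by blast
    then have "covers_except [] S y"
      unfolding covers_except_def by auto
    then show ?thesis
      using True by (intro exI[of _ "[]"] exI[of _ y]) auto
  next
    case False
    then obtain u w S0 where S: "S = insert u (insert w S0)" "u \<notin> S0" "w \<notin> S0" "u \<noteq> w"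
      and max: "\<forall>x\<in>S0. t x u \<preceq> t w u"
      using exists_cherry_pair less.prems(1) by blast
    have S0: "finite S0" "S0 \<subseteq> {..<n}" and uw: "u < n" "w < n"
      using less.prems S(1) by auto
    have card_S: "card S = card S0 + 2"
      using S S0(1) by simp
    then obtain vs0 y0 where IH: "length vs0 \<le> card S0 ^ 2 div 4" "\<forall>v\<in>set vs0. admissible v"
      "covers_except vs0 S0 y0"
      using less.hyps[of S0] S0 by auto
    have bound: "card S ^ 2 div 4 = card S0 ^ 2 div 4 + card S0 + 1"
      using card_S square_div_4_add_2 by simp
    show ?thesis
    proof (cases "\<exists>x0\<in>S0. x0 \<noteq> y0")
      case True
      then obtain x0 where "x0 \<in> S0" "x0 \<noteq> y0"
        by blast
      \<comment> \<open>with y outside S no entry is exempted\<close>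
      obtain y where "y \<notin> S"
        using less.prems(1) ex_new_if_finite infinite_UNIV_nat by blast
      obtain vs where "length vs = length vs0 + card S0 + 1" "\<forall>v\<in>set vs. admissible v"
        "covers_except vs S y"
        using covers_step_full[OF S0 uw S(4,2,3) max IH(3,2) \<open>x0 \<in> S0\<close> \<open>x0 \<noteq> y0\<close>] S(1)
        by blast
      then show ?thesis
        using IH(1) bound \<open>y \<notin> S\<close> by (intro exI[of _ vs] exI[of _ y]) auto
    next
      case False
      then have "card S0 \<le> 1"
        using card_mono[OF finite.insertI[OF finite.emptyI], of S0 y0] by auto
      then obtain vs where "length vs = card S0 + 1" "\<forall>v\<in>set vs. admissible v"
        "covers_except vs S w"
        using covers_step_defective[OF S0 _ uw S(4,2,3) max] S(1) by blast
      then show ?thesis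
        using bound card_S \<open>card S0 \<le> 1\<close> by (intro exI[of _ vs] exI[of _ w]) auto
    qed
  qed
qed

lemma full_cover_exists:
  "\<exists>vs. (\<forall>v\<in>set vs. admissible v) \<and> length vs \<le> (if 4 \<le> n then n ^ 2 div 4 else n)
    \<and> (\<forall>i<n. \<forall>j<n. covered vs i j)"
proof -
  obtain vs y where vs: "length vs \<le> n ^ 2 div 4" "\<forall>v\<in>set vs. admissible v"
    "covers_except vs {..<n} y" "y < n \<longrightarrow> n \<le> 3"
    using covers_except_exists[of "{..<n}"] by auto
  show ?thesis
  proof (cases "y < n")
    case True
    define ws where "ws = vs @ [star y {}]"
    have "n \<in> {1, 2, 3}"
      using True vs(4) by auto
    then have "length ws \<le> (if 4 \<le> n then n ^ 2 div 4 else n)"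
      using vs(1) unfolding ws_def by (auto simp: power2_eq_square)
    moreover have "\<forall>v\<in>set ws. admissible v"
      using vs(2) True admissible_star[OF rank_one_below_star[of y "{}"]] unfolding ws_def by auto
    moreover have "covered ws i j" if "i < n" "j < n" for i j
    proof (cases "(i, j) = (y, y)")
      case True
      then show ?thesis
        using covered_star_centre[of y "{}" ws] \<open>y < n\<close> unfolding ws_def by auto
    next
      case False
      then show ?thesis
        using vs(3) that covered_mono[of vs i j ws] unfolding covers_except_def ws_def by auto
    qed
    ultimately show ?thesis
      by blast
  next
    case False
    have "n ^ 2 div 4 \<le> n" if "n < 4"
    proof -
      have "n \<in> {0, 1, 2, 3}"
        using that by auto
      then show ?thesis
        by (auto simp: power2_eq_square)
    qed
    then show ?thesis
      using vs False unfolding covers_except_def by (intro exI[of _ vs]) auto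
  qed
qed

lemma sparse_rank_one_representation:
  "\<exists>m b. m \<le> (if 4 \<le> n then n ^ 2 div 4 else n)
    \<and> (\<forall>j<m. card {i. i < n \<and> b j i \<noteq> z} \<le> 3)
    \<and> (\<forall>i<n. \<forall>l<n. A i l = isum (\<oplus>) z (\<lambda>j. b j i \<otimes> b j l) m)"
proof -
  obtain vs where vs: "\<forall>v\<in>set vs. admissible v" "length vs \<le> (if 4 \<le> n then n ^ 2 div 4 else n)"
    "\<forall>i<n. \<forall>j<n. covered vs i j"
    using full_cover_exists by blast
  then have "\<forall>v\<in>set vs. rank_one_below v" "\<forall>j<length vs. card {i. i < n \<and> (vs ! j) i \<noteq> z} \<le> 3"
    unfolding admissible_def support_def by auto
  then show ?thesis
    using vs(2,3) representation_from_cover by (intro exI[of _ "length vs"] exI[of _ "(!) vs"]) auto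
qed

end

context totally_ordered_normal_incline
begin

lemma completely_positive_imp_diagonally_bounded:
  assumes "completely_positive (\<oplus>) (\<otimes>) z n A"
  shows "diagonally_bounded_matrix (\<oplus>) (\<otimes>) z e A n (\<lambda>i. THE c. c \<otimes> c = A i i)"
proof -
  define s where "s = (\<lambda>i. THE c. c \<otimes> c = A i i)"
  obtain k B where B: "\<And>i j. i < n \<Longrightarrow> j < n \<Longrightarrow> A i j = isum (\<oplus>) z (\<lambda>l. B i l \<otimes> B j l) k"
    using assms unfolding completely_positive_def BBt_def by blast
  have s: "s i \<otimes> s i = A i i" for i
    unfolding s_def using unique_sqrt by (rule theI')
  have B_le: "B i l \<preceq> s i" if "i < n" "l < k" for i l
  proof (rule square_le_imp_le)
    show "B i l \<otimes> B i l \<preceq> s i \<otimes> s i"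
      using isum_upper[OF \<open>l < k\<close>, of "\<lambda>l. B i l \<otimes> B i l" z] B[OF \<open>i < n\<close> \<open>i < n\<close>] s[of i]
      by simp
  qed
  have "diagonally_bounded_matrix (\<oplus>) (\<otimes>) z e A n s"
  proof (intro diagonally_bounded_matrix.intro diagonally_bounded_matrix_axioms.intro)
    show "totally_ordered_normal_incline (\<oplus>) (\<otimes>) z e"
      by unfold_locales
  next
    fix i j assume ij: "i < n" "j < n"
    have "(\<lambda>l. B i l \<otimes> B j l) = (\<lambda>l. B j l \<otimes> B i l)"
      using tm_comm by auto
    then show "A i j = A j i"
      using B[OF ij] B[OF ij(2,1)] by simp
    have "isum (\<oplus>) z (\<lambda>l. B i l \<otimes> B j l) k \<preceq> s i \<otimes> s j"
      using B_le ij tm_mono z_least by (intro isum_least) auto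
    then show "A i j \<preceq> s i \<otimes> s j"
      using B[OF ij] by simp
  next
    fix i assume "i < n"
    show "A i i = s i \<otimes> s i"
      using s by simp
  qed
  then show ?thesis
    unfolding s_def .
qed

end

theorem mainTheorem6:
  fixes pl tm :: "'a \<Rightarrow> 'a \<Rightarrow> 'a" and z e :: 'a
    and n :: nat and A :: "nat \<Rightarrow> nat \<Rightarrow> 'a"
  assumes "normal_incline pl tm z e"
    and "totally_ordered_incline pl"
    and "completely_positive pl tm z n A"
  shows "cp_rank pl tm z n A \<le> max n (n^2 div 4)
     \<and> (n \<ge> 4 \<longrightarrow>
         (\<exists>m (b :: nat \<Rightarrow> nat \<Rightarrow> 'a). m \<le> n^2 div 4 \<and>
            (\<forall>j<m. card {i. i < n \<and> b j i \<noteq> z} \<le> 3) \<and>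
            (\<forall>i<n. \<forall>l<n. A i l = isum pl z (\<lambda>j. tm (b j i) (b j l)) m)))"
proof -
  interpret totally_ordered_normal_incline pl tm z e
    using assms(1,2) by unfold_locales
  interpret diagonally_bounded_matrix pl tm z e A n "\<lambda>i. THE c. tm c c = A i i"
    using completely_positive_imp_diagonally_bounded[OF assms(3)] .
  obtain m b where m: "m \<le> (if 4 \<le> n then n ^ 2 div 4 else n)"
    "\<forall>j<m. card {i. i < n \<and> b j i \<noteq> z} \<le> 3"
    "\<forall>i<n. \<forall>l<n. A i l = isum pl z (\<lambda>j. tm (b j i) (b j l)) m"
    using sparse_rank_one_representation by blast
  have "cp_rank pl tm z n A \<le> m"
    unfolding cp_rank_def BBt_def using m(3) by (intro Least_le exI[of _ "\<lambda>i j. b j i"]) simp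
  then show ?thesis
    using m by (auto split: if_splits)
qed

end
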